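(* Let $\mathcal E$ be a nest on a complex Banach space $X$ and let $\Psi$ be an essential support function on $\mathcal E$. Then: (i) $\mathcal M^e(\Psi)$ is a $\mathcal T(\mathcal E)$-bimodule containing every $\mathcal T(\mathcal E)$-bimodule $\mathcal J$ with $\Phi^e_{\mathcal J}=\Psi$; (ii) $\mathcal M^0(\Psi)$ is a $\mathcal T(\mathcal E)$-bimodule contained in every norm-closed $\mathcal T(\mathcal E)$-bimodule $\mathcal J$ with $\Phi^e_{\mathcal J}=\Psi$.
   Context: A nest $\mathcal E$ on $X$ is a family of closed linear subspaces of $X$, totally ordered by inclusion, containing $\{0\}$ and $X$, closed under arbitrary meets $\wedge$ (intersections) and joins $\vee$ (norm-closed linear spans of unions). For $E\in\mathcal E$, $E_-=\vee\{F\in\mathcal E: F\subsetneq E\}$ and $E_+=\wedge\{F\in\mathcal E: E\subsetneq F\}$. $\mathcal T(\mathcal E)=\{T\in\mathcal B(X): TE\subseteq E\ \forall E\in\mathcal E\}$; a $\mathcal T(\mathcal E)$-bimodule is a linear subspace $\mathcal J\subseteq\mathcal B(X)$ with $\mathcal T(\mathcal E)\mathcal J,\mathcal J\mathcal T(\mathcal E)\subseteq\mathcal J$. For subspaces $M,L$ ($L$ closed), $M/L=\{m+L:m\in M\}$ and $\dim(M/L)$ is its dimension. $\mathcal E_f=\{N\in\mathcal E: 0<\dim(N/N_-)<\infty\}$. An essential support function is an inclusion-preserving map $\Psi:\mathcal E\to\mathcal E$ such that for all $N,N_1,N_2\in\mathcal E$ with $N_1\subseteq N_2$: (a) $\Psi(N)\in\mathcal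 E_f\Rightarrow\Psi(N)=\Psi(N)_+$; (b) $\dim(N_2/N_1)<\infty\Rightarrow\Psi(N_2)=\Psi(N_1)$. For a bimodule $\mathcal J$, $\Phi^e_{\mathcal J}(N)=\wedge\{L\in\mathcal E: \dim(TN/L)<\infty\ \forall T\in\mathcal J\}$. Define $\mathcal M^e(\Psi)=\{T\in\mathcal B(X): \dim(TN/L)<\infty$ for all $N,L\in\mathcal E$ with $L_+\supsetneq\Psi(N)\}$ and $\mathcal M^0(\Psi)$ = the norm closure of $\sum_{L,N\in\mathcal E,\ L_-\subsetneq\Psi(N)}\operatorname{span}\{f\otimes x: f\in(N_-)^\perp, x\in L\}$, where $S^\perp=\{f\in X^*: f(S)=\{0\}\}$ and $f\otimes x$ is $y\mapsto f(y)x$. *)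

theory Defs
  imports "HOL-Analysis.Analysis"
begin

text \<open>HOL has no class of complex vector spaces; a complex Banach space is a real
Banach space with a complex scalar multiplication extending the real one and
compatible with the norm.\<close>

class complex_banach = banach +
  fixes cscale :: "complex \<Rightarrow> 'a \<Rightarrow> 'a"
  assumes cscale_add_right: "cscale a (x + y) = cscale a x + cscale a y"
    and cscale_add_left: "cscale (a + b) x = cscale a x + cscale b x"
    and cscale_cscale: "cscale a (cscale b x) = cscale (a * b) x"
    and cscale_one: "cscale 1 x = x"
    and scaleR_cscale: "r *\<^sub>R x = cscale (complex_of_real r) x"
    and norm_cscale: "norm (cscale a x) = cmod a * norm x"

definition csubspace :: "'a::complex_banach set \<Rightarrow> bool" where
  "csubspace S \<longleftrightarrow> 0 \<in> S \<and> (\<forall>x\<in>S. \<forall>y\<in>S. x + y \<in> S) \<and> (\<forall>c. \<forall>x\<in>S. cscale c x \<in> S)"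

definition cspan :: "'a::complex_banach set \<Rightarrow> 'a set" where
  "cspan S = \<Inter>{V. csubspace V \<and> S \<subseteq> V}"

definition closed_csubspace :: "'a::complex_banach set \<Rightarrow> bool" where
  "closed_csubspace S \<longleftrightarrow> csubspace S \<and> closed S"

definition join :: "'a::complex_banach set set \<Rightarrow> 'a set" where
  "join F = closure (cspan (\<Union>F))"

text \<open>\<open>fin_quot M L\<close> means \<open>dim(M/L) < \<infinity>\<close>: the image of \<open>M\<close> in \<open>X/L\<close> is
spanned by the classes of finitely many elements of \<open>M\<close>.\<close>
definition fin_quot :: "'a::complex_banach set \<Rightarrow> 'a set \<Rightarrow> bool" where
  "fin_quot M L \<longleftrightarrow> (\<exists>F. finite F \<and> F \<subseteq> M \<and> M \<subseteq> {f + l |f l. f \<in> cspan F \<and> l \<in> L})"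

definition nest :: "'a::complex_banach set set \<Rightarrow> bool" where
  "nest \<E> \<longleftrightarrow> (\<forall>E\<in>\<E>. closed_csubspace E) \<and> (\<forall>A\<in>\<E>. \<forall>B\<in>\<E>. A \<subseteq> B \<or> B \<subseteq> A)
     \<and> {0} \<in> \<E> \<and> UNIV \<in> \<E>
     \<and> (\<forall>F. F \<subseteq> \<E> \<longrightarrow> \<Inter>F \<in> \<E>) \<and> (\<forall>F. F \<subseteq> \<E> \<longrightarrow> join F \<in> \<E>)"

definition lower :: "'a::complex_banach set set \<Rightarrow> 'a set \<Rightarrow> 'a set" where
  "lower \<E> E = join {F\<in>\<E>. F \<subset> E}"

definition upper :: "'a::complex_banach set set \<Rightarrow> 'a set \<Rightarrow> 'a set" where
  "upper \<E> E = \<Inter>{F\<in>\<E>. E \<subset> F}"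

text \<open>\<open>E_f\<close>: \<open>0 < dim(N/N_-) < \<infinity>\<close>; \<open>dim(N/N_-) > 0\<close> means \<open>N \<not>\<subseteq> N_-\<close>.\<close>
definition Ef :: "'a::complex_banach set set \<Rightarrow> 'a set set" where
  "Ef \<E> = {N\<in>\<E>. \<not> N \<subseteq> lower \<E> N \<and> fin_quot N (lower \<E> N)}"

definition ess_support_fn :: "'a::complex_banach set set \<Rightarrow> ('a set \<Rightarrow> 'a set) \<Rightarrow> bool" where
  "ess_support_fn \<E> \<Psi> \<longleftrightarrow>
     (\<forall>N\<in>\<E>. \<Psi> N \<in> \<E>)
   \<and> (\<forall>N1\<in>\<E>. \<forall>N2\<in>\<E>. N1 \<subseteq> N2 \<longrightarrow> \<Psi> N1 \<subseteq> \<Psi> N2)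
   \<and> (\<forall>N\<in>\<E>. \<Psi> N \<in> Ef \<E> \<longrightarrow> \<Psi> N = upper \<E> (\<Psi> N))
   \<and> (\<forall>N1\<in>\<E>. \<forall>N2\<in>\<E>. N1 \<subseteq> N2 \<longrightarrow> fin_quot N2 N1 \<longrightarrow> \<Psi> N2 = \<Psi> N1)"

text \<open>\<open>B(X)\<close>: bounded complex-linear operators, as elements of the Banach space
of bounded (real-)linear operators with the operator norm.\<close>
definition bop :: "('a::complex_banach \<Rightarrow>\<^sub>L 'a) set" where
  "bop = {T. \<forall>c x. blinfun_apply T (cscale c x) = cscale c (blinfun_apply T x)}"

definition dual :: "('a::complex_banach \<Rightarrow>\<^sub>L complex) set" where
  "dual = {f. \<forall>c x. blinfun_apply f (cscale c x) = c * blinfun_apply f x}"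

definition annih :: "'a::complex_banach set \<Rightarrow> ('a \<Rightarrow>\<^sub>L complex) set" where
  "annih S = {f\<in>dual. \<forall>y\<in>S. blinfun_apply f y = 0}"

definition rank_one :: "('a::complex_banach \<Rightarrow>\<^sub>L complex) \<Rightarrow> 'a \<Rightarrow> ('a \<Rightarrow>\<^sub>L 'a)" where
  "rank_one f x = Blinfun (\<lambda>y. cscale (blinfun_apply f y) x)"

definition op_csubspace :: "('a::complex_banach \<Rightarrow>\<^sub>L 'a) set \<Rightarrow> bool" where
  "op_csubspace J \<longleftrightarrow> J \<subseteq> bop \<and> 0 \<in> J \<and> (\<forall>S\<in>J. \<forall>R\<in>J. S + R \<in> J)
     \<and> (\<forall>c. \<forall>S\<in>J. \<forall>R. (\<forall>x. blinfun_apply R x = cscale c (blinfun_apply S x)) \<longrightarrow> R \<in> J)"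

definition op_cspan :: "('a::complex_banach \<Rightarrow>\<^sub>L 'a) set \<Rightarrow> ('a \<Rightarrow>\<^sub>L 'a) set" where
  "op_cspan S = \<Inter>{J. op_csubspace J \<and> S \<subseteq> J}"

definition nest_alg :: "'a::complex_banach set set \<Rightarrow> ('a \<Rightarrow>\<^sub>L 'a) set" where
  "nest_alg \<E> = {T\<in>bop. \<forall>E\<in>\<E>. blinfun_apply T ` E \<subseteq> E}"

definition bimodule :: "'a::complex_banach set set \<Rightarrow> ('a \<Rightarrow>\<^sub>L 'a) set \<Rightarrow> bool" where
  "bimodule \<E> J \<longleftrightarrow> op_csubspace J
     \<and> (\<forall>A\<in>nest_alg \<E>. \<forall>S\<in>J. A o\<^sub>L S \<in> J \<and> S o\<^sub>L A \<in> J)"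

definition Phi_e :: "'a::complex_banach set set \<Rightarrow> ('a \<Rightarrow>\<^sub>L 'a) set \<Rightarrow> 'a set \<Rightarrow> 'a set" where
  "Phi_e \<E> J N = \<Inter>{L\<in>\<E>. \<forall>T\<in>J. fin_quot (blinfun_apply T ` N) L}"

definition Me :: "'a::complex_banach set set \<Rightarrow> ('a set \<Rightarrow> 'a set) \<Rightarrow> ('a \<Rightarrow>\<^sub>L 'a) set" where
  "Me \<E> \<Psi> = {T\<in>bop. \<forall>N\<in>\<E>. \<forall>L\<in>\<E>. \<Psi> N \<subset> upper \<E> L \<longrightarrow> fin_quot (blinfun_apply T ` N) L}"

definition M0 :: "'a::complex_banach set set \<Rightarrow> ('a set \<Rightarrow> 'a set) \<Rightarrow> ('a \<Rightarrow>\<^sub>L 'a) set" where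
  "M0 \<E> \<Psi> = closure (op_cspan (\<Union>{{rank_one f x |f x. f \<in> annih (lower \<E> N) \<and> x \<in> L}
        |L N. L \<in> \<E> \<and> N \<in> \<E> \<and> lower \<E> L \<subset> \<Psi> N}))"

end

theory Submission
  imports Defs
begin

text \<open>
  Finite dimensionality of \<open>T N\<close> modulo \<open>L\<close> is preserved under sums and scalar multiples of \<open>T\<close>,
  under left multiplication by operators leaving \<open>L\<close> invariant and under right multiplication by
  operators leaving \<open>N\<close> invariant; hence \<open>M\<^sup>e(\<Psi>)\<close> is a bimodule. If \<open>T \<in> J\<close> had \<open>dim(T N / L) = \<infinity>\<close>,
  every \<open>L'\<close> in the meet defining \<open>\<Phi>\<^sup>e\<^sub>J(N)\<close> would strictly contain \<open>L\<close>, forcing \<open>L\<^sub>+ \<subseteq> \<Psi>(N)\<close>.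

  The generators \<open>f \<otimes> x\<close> of \<open>M\<^sup>0(\<Psi>)\<close> are mapped to generators by multiplication with the nest
  algebra, and spans and closures of bimodules are bimodules. Conversely, if \<open>L\<^sub>- \<subset> \<Psi>(N) = \<Phi>\<^sup>e\<^sub>J(N)\<close>
  there are \<open>T \<in> J\<close> and \<open>y \<in> N\<close> with \<open>T y \<notin> L\<^sub>-\<close>; Hahn-Banach gives \<open>g \<in> L\<^sub>-\<^sup>\<perp>\<close> with \<open>g (T y) \<noteq> 0\<close>,
  and \<open>f \<otimes> x = g(T y)\<^sup>-\<^sup>1 (g \<otimes> x) T (f \<otimes> y)\<close> lies in \<open>J\<close> since \<open>g \<otimes> x\<close> and \<open>f \<otimes> y\<close> lie in \<open>\<T>(\<E>)\<close>.
\<close>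

section \<open>Complex subspaces and finite codimension\<close>

interpretation cv: vector_space "cscale :: complex \<Rightarrow> 'a::complex_banach \<Rightarrow> 'a"
  by unfold_locales (simp_all add: cscale_add_right cscale_add_left cscale_cscale cscale_one)

interpretation cvp: vector_space_pair
  "cscale :: complex \<Rightarrow> 'a::complex_banach \<Rightarrow> 'a" "cscale :: complex \<Rightarrow> 'b::complex_banach \<Rightarrow> 'b" ..

lemma csubspace_eq: "csubspace = cv.subspace"
  by (auto simp: fun_eq_iff csubspace_def cv.subspace_def)

lemma cspan_eq: "cspan = cv.span"
  unfolding cspan_def csubspace_eq fun_eq_iff
  using cv.span_minimal cv.span_superset cv.subspace_span by blast

lemma fin_quot_iff:
  assumes L: "cv.subspace L"
  shows "fin_quot M L \<longleftrightarrow> (\<exists>F. finite F \<and> M \<subseteq> {f + l |f l. f \<in> cv.span F \<and> l \<in> L})"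
proof
  assume "fin_quot M L" then show "\<exists>F. finite F \<and> M \<subseteq> {f + l |f l. f \<in> cv.span F \<and> l \<in> L}"
    unfolding fin_quot_def cspan_eq by blast
next
  assume "\<exists>F. finite F \<and> M \<subseteq> {f + l |f l. f \<in> cv.span F \<and> l \<in> L}"
  then obtain F where F: "finite F" "M \<subseteq> {f + l |f l. f \<in> cv.span F \<and> l \<in> L}" by blast
  \<comment> \<open>Lift a basis of the finite-dimensional space of \<open>span F\<close>-parts of \<open>M\<close> back into \<open>M\<close>.\<close>
  define W where "W = {s \<in> cv.span F. \<exists>l\<in>L. s + l \<in> M}"
  obtain B where B: "B \<subseteq> W" "cv.independent B" "W \<subseteq> cv.span B"
    using cv.maximal_independent_subset by blast
  have "finite B"
    using cv.independent_span_bound[OF F(1) B(2)] B(1) unfolding W_def by blast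
  have "\<forall>b\<in>B. \<exists>l\<in>L. b + l \<in> M" using B(1) unfolding W_def by blast
  then obtain lift where lift: "\<And>b. b \<in> B \<Longrightarrow> lift b \<in> L \<and> b + lift b \<in> M" by metis
  define G where "G = (\<lambda>b. b + lift b) ` B"
  define V where "V = {f + l |f l. f \<in> cv.span G \<and> l \<in> L}"
  have V: "cv.subspace V" unfolding V_def by (rule cv.subspace_sums[OF cv.subspace_span L])
  have LV: "L \<subseteq> V" unfolding V_def using cv.span_zero by force
  have "B \<subseteq> V"
  proof
    fix b assume b: "b \<in> B"
    have "b + lift b \<in> cv.span G" unfolding G_def using b by (blast intro: cv.span_base)
    moreover have "- lift b \<in> L" using lift[OF b] L by (simp add: cv.subspace_neg)
    ultimately show "b \<in> V" unfolding V_def by force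
  qed
  then have "W \<subseteq> V" using B(3) cv.span_minimal[OF _ V] by blast
  have "M \<subseteq> V"
  proof
    fix m assume "m \<in> M"
    then obtain s l where "m = s + l" "s \<in> cv.span F" "l \<in> L" using F(2) by blast
    then have "s \<in> W" "l \<in> V" using \<open>m \<in> M\<close> LV unfolding W_def by auto
    then show "m \<in> V" using \<open>m = s + l\<close> \<open>W \<subseteq> V\<close> cv.subspace_add[OF V] by blast
  qed
  moreover have "finite G" "G \<subseteq> M" using \<open>finite B\<close> lift unfolding G_def by auto
  ultimately show "fin_quot M L" unfolding fin_quot_def cspan_eq V_def by blast
qed

lemma fin_quot_trivial: "M \<subseteq> L \<Longrightarrow> fin_quot M L"
  unfolding fin_quot_def by (rule exI[of _ "{}"]) (force simp: cspan_eq cv.span_zero)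

lemma fin_quot_mono:
  assumes "fin_quot M L" "M' \<subseteq> M" "L \<subseteq> L'" "cv.subspace L'"
  shows "fin_quot M' L'"
proof -
  obtain F where "finite F" "M \<subseteq> {f + l |f l. f \<in> cv.span F \<and> l \<in> L}"
    using assms(1) unfolding fin_quot_def cspan_eq by blast
  then show ?thesis using assms(2,3) unfolding fin_quot_iff[OF assms(4)] by blast
qed

lemma fin_quot_sums:
  assumes "fin_quot M1 L" "fin_quot M2 L" "cv.subspace L"
  shows "fin_quot {x + y |x y. x \<in> M1 \<and> y \<in> M2} L"
proof -
  obtain F1 F2 where F: "finite F1" "finite F2"
    and M1: "M1 \<subseteq> {f + l |f l. f \<in> cv.span F1 \<and> l \<in> L}"
    and M2: "M2 \<subseteq> {f + l |f l. f \<in> cv.span F2 \<and> l \<in> L}"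
    using assms unfolding fin_quot_iff[OF assms(3)] by blast
  define V where "V = {f + l |f l. f \<in> cv.span (F1 \<union> F2) \<and> l \<in> L}"
  have V: "cv.subspace V" unfolding V_def by (rule cv.subspace_sums[OF cv.subspace_span assms(3)])
  have "M1 \<subseteq> V" "M2 \<subseteq> V"
    using M1 M2 cv.span_mono[of F1 "F1 \<union> F2"] cv.span_mono[of F2 "F1 \<union> F2"] unfolding V_def by blast+
  then have "{x + y |x y. x \<in> M1 \<and> y \<in> M2} \<subseteq> V" using cv.subspace_add[OF V] by blast
  then show ?thesis unfolding fin_quot_iff[OF assms(3)] V_def using F by blast
qed

lemma fin_quot_image:
  assumes A: "Vector_Spaces.linear cscale cscale A" and AL: "A ` L \<subseteq> L"
    and L: "cv.subspace L" and M: "fin_quot M L"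
  shows "fin_quot (A ` M) L"
proof -
  obtain F where "finite F" and F: "M \<subseteq> {f + l |f l. f \<in> cv.span F \<and> l \<in> L}"
    using M unfolding fin_quot_iff[OF L] by blast
  have "A ` M \<subseteq> {f + l |f l. f \<in> cv.span (A ` F) \<and> l \<in> L}"
  proof
    fix y assume "y \<in> A ` M"
    then obtain s l where "y = A (s + l)" "s \<in> cv.span F" "l \<in> L" using F by blast
    then show "y \<in> {f + l |f l. f \<in> cv.span (A ` F) \<and> l \<in> L}"
      using AL cvp.linear_span_image[OF A] cvp.linear_add[OF A] by blast
  qed
  then show ?thesis unfolding fin_quot_iff[OF L] using \<open>finite F\<close> by blast
qed

lemma bop_cscale: "T \<in> bop \<Longrightarrow> blinfun_apply T (cscale c x) = cscale c (blinfun_apply T x)"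
  unfolding bop_def by blast

lemma bop_linear: "T \<in> bop \<Longrightarrow> Vector_Spaces.linear cscale cscale (blinfun_apply T)"
  unfolding Vector_Spaces.linear_iff by (simp add: cv.vector_space_axioms blinfun.add_right bop_cscale)

lemma bop_compose: "S \<in> bop \<Longrightarrow> R \<in> bop \<Longrightarrow> S o\<^sub>L R \<in> bop"
  unfolding bop_def by simp

lemma op_csubspace_bop: "op_csubspace bop"
  unfolding op_csubspace_def bop_def
  by (simp add: blinfun.add_left cscale_add_right cscale_cscale mult.commute)

lemma op_csubspace_cscale:
  "op_csubspace J \<Longrightarrow> S \<in> J \<Longrightarrow> (\<And>x. blinfun_apply R x = cscale c (blinfun_apply S x)) \<Longrightarrow> R \<in> J"
  unfolding op_csubspace_def by blast

lemma bounded_linear_cscale: "bounded_linear (cscale c :: 'a::complex_banach \<Rightarrow> 'a)"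
proof (rule bounded_linear_intro[where K="cmod c"])
  fix r and x :: 'a
  show "cscale c (r *\<^sub>R x) = r *\<^sub>R cscale c x"
    by (simp add: scaleR_cscale cscale_cscale mult.commute)
qed (simp_all add: cscale_add_right norm_cscale)

lemma closed_bop: "closed (bop :: ('a::complex_banach \<Rightarrow>\<^sub>L 'a) set)"
proof -
  have "bop = (\<Inter>c. \<Inter>x::'a. {T. blinfun_apply T (cscale c x) = cscale c (blinfun_apply T x)})"
    unfolding bop_def by blast
  also have "closed \<dots>"
    by (intro closed_INT ballI closed_Collect_eq linear_continuous_on bounded_linear_apply_blinfun
        bounded_linear_compose[OF bounded_linear_cscale bounded_linear_apply_blinfun])
  finally show ?thesis .
qed

definition cmul :: "complex \<Rightarrow> ('a::complex_banach \<Rightarrow>\<^sub>L 'a)" where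
  "cmul c = Blinfun (cscale c)"

lemma cmul_apply [simp]: "blinfun_apply (cmul c) x = cscale c x"
  unfolding cmul_def bounded_linear_Blinfun_apply[OF bounded_linear_cscale] ..

lemma nest_subspace: "nest \<E> \<Longrightarrow> E \<in> \<E> \<Longrightarrow> cv.subspace E"
  unfolding nest_def closed_csubspace_def csubspace_eq by blast

lemma nest_closed: "nest \<E> \<Longrightarrow> E \<in> \<E> \<Longrightarrow> closed E"
  unfolding nest_def closed_csubspace_def by blast

lemma nest_total: "nest \<E> \<Longrightarrow> A \<in> \<E> \<Longrightarrow> B \<in> \<E> \<Longrightarrow> A \<subseteq> B \<or> B \<subseteq> A"
  unfolding nest_def by blast

lemma nest_alg_bop: "A \<in> nest_alg \<E> \<Longrightarrow> A \<in> bop"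
  unfolding nest_alg_def by blast

lemma nest_alg_invariant: "A \<in> nest_alg \<E> \<Longrightarrow> E \<in> \<E> \<Longrightarrow> blinfun_apply A ` E \<subseteq> E"
  unfolding nest_alg_def by blast

lemma lower_in_nest: "nest \<E> \<Longrightarrow> lower \<E> N \<in> \<E>"
  unfolding lower_def nest_def by auto

lemma subset_lower:
  assumes "E \<in> \<E>" "E \<subset> N"
  shows "E \<subseteq> lower \<E> N"
proof -
  have "E \<subseteq> \<Union>{F \<in> \<E>. F \<subset> N}" using assms by blast
  also have "\<dots> \<subseteq> cspan (\<Union>{F \<in> \<E>. F \<subset> N})" unfolding cspan_eq by (rule cv.span_superset)
  also have "\<dots> \<subseteq> lower \<E> N" unfolding lower_def join_def by (rule closure_subset)
  finally show ?thesis .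
qed

lemma bounded_linear_rank_one:
  fixes f :: "'a::complex_banach \<Rightarrow>\<^sub>L complex"
  shows "bounded_linear (\<lambda>y. cscale (blinfun_apply f y) x)"
proof (rule bounded_linear_intro[where K="norm f * norm x"])
  fix r y
  have "blinfun_apply f (r *\<^sub>R y) = complex_of_real r * blinfun_apply f y"
    by (simp add: blinfun.scaleR_right scaleR_conv_of_real)
  then show "cscale (blinfun_apply f (r *\<^sub>R y)) x = r *\<^sub>R cscale (blinfun_apply f y) x"
    by (simp add: scaleR_cscale cscale_cscale)
next
  fix y
  have "cmod (blinfun_apply f y) * norm x \<le> (norm f * norm y) * norm x"
    by (intro mult_right_mono norm_blinfun) simp
  then show "norm (cscale (blinfun_apply f y) x) \<le> norm y * (norm f * norm x)"
    by (simp add: norm_cscale algebra_simps)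
qed (simp add: blinfun.add_right cscale_add_left)

lemma rank_one_apply [simp]: "blinfun_apply (rank_one f x) y = cscale (blinfun_apply f y) x"
  unfolding rank_one_def bounded_linear_Blinfun_apply[OF bounded_linear_rank_one] ..

lemma dual_cscale: "f \<in> dual \<Longrightarrow> blinfun_apply f (cscale c x) = c * blinfun_apply f x"
  unfolding dual_def by blast

lemma rank_one_bop: "f \<in> dual \<Longrightarrow> rank_one f x \<in> bop"
  unfolding bop_def by (simp add: dual_cscale cscale_cscale)

lemma compose_rank_one_left: "A \<in> bop \<Longrightarrow> A o\<^sub>L rank_one f x = rank_one f (blinfun_apply A x)"
  by (rule blinfun_eqI) (simp add: bop_cscale)

lemma compose_rank_one_right: "rank_one f x o\<^sub>L A = rank_one (f o\<^sub>L A) x"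
  by (rule blinfun_eqI) simp

lemma dual_compose: "f \<in> dual \<Longrightarrow> A \<in> bop \<Longrightarrow> f o\<^sub>L A \<in> dual"
  unfolding dual_def by (simp add: bop_cscale)

lemma rank_one_nest_alg:
  assumes nest: "nest \<E>" and K: "K \<in> \<E>" and h: "h \<in> annih (lower \<E> K)" and v: "v \<in> K"
  shows "rank_one h v \<in> nest_alg \<E>"
  unfolding nest_alg_def
proof (intro CollectI conjI ballI)
  show "rank_one h v \<in> bop" using h rank_one_bop unfolding annih_def by blast
  fix E assume E: "E \<in> \<E>"
  show "blinfun_apply (rank_one h v) ` E \<subseteq> E"
  proof (cases "K \<subseteq> E")
    case True
    then show ?thesis using v cv.subspace_scale[OF nest_subspace[OF nest E]] by auto
  next
    case False
    then have "E \<subseteq> lower \<E> K" using nest_total[OF nest E K] subset_lower[OF E] by blast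
    then show ?thesis using h cv.subspace_0[OF nest_subspace[OF nest E]] by (auto simp: annih_def)
  qed
qed

section \<open>The bimodule \<open>M\<^sup>e(\<Psi>)\<close>\<close>

lemma fin_quot_image_add:
  assumes "fin_quot (blinfun_apply S ` N) L" "fin_quot (blinfun_apply R ` N) L" "cv.subspace L"
  shows "fin_quot (blinfun_apply (S + R) ` N) L"
proof (rule fin_quot_mono[OF fin_quot_sums[OF assms] _ order_refl assms(3)])
  show "blinfun_apply (S + R) ` N
      \<subseteq> {x + y |x y. x \<in> blinfun_apply S ` N \<and> y \<in> blinfun_apply R ` N}"
    by (auto simp: plus_blinfun.rep_eq)
qed

lemma fin_quot_image_cscale:
  assumes S: "S \<in> bop" and N: "cv.subspace N" and L: "cv.subspace L"
    and R: "\<And>x. blinfun_apply R x = cscale c (blinfun_apply S x)"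
    and fq: "fin_quot (blinfun_apply S ` N) L"
  shows "fin_quot (blinfun_apply R ` N) L"
proof (rule fin_quot_mono[OF fq _ order_refl L])
  have "blinfun_apply R x = blinfun_apply S (cscale c x)" for x
    by (simp add: R bop_cscale[OF S])
  then show "blinfun_apply R ` N \<subseteq> blinfun_apply S ` N"
    using cv.subspace_scale[OF N] by auto
qed

lemma fin_quot_image_compose_right:
  assumes "blinfun_apply A ` N \<subseteq> N" "cv.subspace L" "fin_quot (blinfun_apply S ` N) L"
  shows "fin_quot (blinfun_apply (S o\<^sub>L A) ` N) L"
  using assms by (intro fin_quot_mono[OF assms(3) _ order_refl assms(2)]) auto

lemma MeI:
  "T \<in> bop \<Longrightarrow> (\<And>N L. N \<in> \<E> \<Longrightarrow> L \<in> \<E> \<Longrightarrow> \<Psi> N \<subset> upper \<E> L \<Longrightarrow> fin_quot (blinfun_apply T ` N) L)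
    \<Longrightarrow> T \<in> Me \<E> \<Psi>"
  unfolding Me_def by blast

lemma MeD:
  "T \<in> Me \<E> \<Psi> \<Longrightarrow> T \<in> bop"
  "T \<in> Me \<E> \<Psi> \<Longrightarrow> N \<in> \<E> \<Longrightarrow> L \<in> \<E> \<Longrightarrow> \<Psi> N \<subset> upper \<E> L \<Longrightarrow> fin_quot (blinfun_apply T ` N) L"
  unfolding Me_def by blast+

lemma Me_bimodule:
  assumes nest: "nest \<E>"
  shows "bimodule \<E> (Me \<E> \<Psi>)"
  unfolding bimodule_def op_csubspace_def
proof (intro conjI ballI allI impI)
  show "Me \<E> \<Psi> \<subseteq> bop" using MeD(1) by blast
  show "0 \<in> Me \<E> \<Psi>"
    using op_csubspace_bop nest_subspace[OF nest]
    by (intro MeI) (auto simp: op_csubspace_def cv.subspace_0 intro!: fin_quot_trivial)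
next
  fix S R assume S: "S \<in> Me \<E> \<Psi>" and R: "R \<in> Me \<E> \<Psi>"
  show "S + R \<in> Me \<E> \<Psi>"
  proof (rule MeI)
    show "S + R \<in> bop"
      using op_csubspace_bop MeD(1)[OF S] MeD(1)[OF R] unfolding op_csubspace_def by blast
    fix N L assume "N \<in> \<E>" "L \<in> \<E>" "\<Psi> N \<subset> upper \<E> L"
    then show "fin_quot (blinfun_apply (S + R) ` N) L"
      by (intro fin_quot_image_add MeD(2)[OF S] MeD(2)[OF R] nest_subspace[OF nest])
  qed
next
  fix c S R assume S: "S \<in> Me \<E> \<Psi>" and R: "\<forall>x. blinfun_apply R x = cscale c (blinfun_apply S x)"
  show "R \<in> Me \<E> \<Psi>"
  proof (rule MeI)
    show "R \<in> bop" using op_csubspace_cscale[OF op_csubspace_bop MeD(1)[OF S]] R by blast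
    fix N L assume "N \<in> \<E>" "L \<in> \<E>" "\<Psi> N \<subset> upper \<E> L"
    then show "fin_quot (blinfun_apply R ` N) L"
      using R MeD[OF S] nest_subspace[OF nest] by (intro fin_quot_image_cscale[of S _ _ R c]) auto
  qed
next
  fix A S assume A: "A \<in> nest_alg \<E>" and S: "S \<in> Me \<E> \<Psi>"
  have "A \<in> bop" using A by (rule nest_alg_bop)
  show "A o\<^sub>L S \<in> Me \<E> \<Psi>"
  proof (rule MeI)
    show "A o\<^sub>L S \<in> bop" using bop_compose \<open>A \<in> bop\<close> MeD(1)[OF S] by blast
    fix N L assume "N \<in> \<E>" "L \<in> \<E>" "\<Psi> N \<subset> upper \<E> L"
    then have "fin_quot (blinfun_apply A ` blinfun_apply S ` N) L"
      by (intro fin_quot_image bop_linear[OF \<open>A \<in> bop\<close>] nest_alg_invariant[OF A]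
          nest_subspace[OF nest] MeD(2)[OF S])
    then show "fin_quot (blinfun_apply (A o\<^sub>L S) ` N) L" by (simp add: image_image)
  qed
  show "S o\<^sub>L A \<in> Me \<E> \<Psi>"
  proof (rule MeI)
    show "S o\<^sub>L A \<in> bop" using bop_compose \<open>A \<in> bop\<close> MeD(1)[OF S] by blast
    fix N L assume "N \<in> \<E>" "L \<in> \<E>" "\<Psi> N \<subset> upper \<E> L"
    then show "fin_quot (blinfun_apply (S o\<^sub>L A) ` N) L"
      by (intro fin_quot_image_compose_right nest_alg_invariant[OF A] nest_subspace[OF nest]
          MeD(2)[OF S])
  qed
qed

lemma bimodule_subset_Me:
  assumes nest: "nest \<E>" and J: "bimodule \<E> J" and Phi: "\<forall>N\<in>\<E>. Phi_e \<E> J N = \<Psi> N"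
  shows "J \<subseteq> Me \<E> \<Psi>"
proof
  fix T assume T: "T \<in> J"
  show "T \<in> Me \<E> \<Psi>"
  proof (rule MeI)
    show "T \<in> bop" using J T unfolding bimodule_def op_csubspace_def by blast
    fix N L assume N: "N \<in> \<E>" and L: "L \<in> \<E>" and less: "\<Psi> N \<subset> upper \<E> L"
    show "fin_quot (blinfun_apply T ` N) L"
    proof (rule ccontr)
      assume nf: "\<not> fin_quot (blinfun_apply T ` N) L"
      have "L \<subset> L'" if "L' \<in> \<E>" "\<forall>T\<in>J. fin_quot (blinfun_apply T ` N) L'" for L'
      proof -
        have "\<not> L' \<subseteq> L"
          using that(2) T nf fin_quot_mono[OF _ order_refl _ nest_subspace[OF nest L]] by blast
        then show ?thesis using nest_total[OF nest L that(1)] by blast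
      qed
      then have "upper \<E> L \<subseteq> Phi_e \<E> J N"
        unfolding Phi_e_def upper_def by blast
      then show False using Phi N less by auto
    qed
  qed
qed

section \<open>Hahn-Banach separation\<close>

text \<open>Partial functionals dominated by the norm are encoded by their graphs, so that Zorn's lemma
  can be applied to sets ordered by inclusion.\<close>

definition norm_dominated_graph :: "('a::real_normed_vector \<times> real) set \<Rightarrow> bool" where
  "norm_dominated_graph G \<longleftrightarrow> subspace G \<and> (\<forall>(x, a)\<in>G. a \<le> norm x)"

lemma norm_dominated_graph_unique:
  assumes G: "norm_dominated_graph G" and "(x, a) \<in> G" "(x, b) \<in> G"
  shows "a = b"
proof -
  have "(x, a) - (x, b) \<in> G" "(x, b) - (x, a) \<in> G"
    using G assms(2,3) subspace_diff unfolding norm_dominated_graph_def by blast+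
  then have "a - b \<le> 0" "b - a \<le> 0" using G unfolding norm_dominated_graph_def by auto
  then show ?thesis by simp
qed

lemma norm_dominated_graph_extension_value:
  assumes M: "norm_dominated_graph M"
  shows "\<exists>c. (\<forall>(y, b)\<in>M. b - norm (y - z) \<le> c) \<and> (\<forall>(x, a)\<in>M. c \<le> norm (x + z) - a)"
proof -
  have sM: "subspace M" and dom: "\<And>x a. (x, a) \<in> M \<Longrightarrow> a \<le> norm x"
    using M unfolding norm_dominated_graph_def by auto
  have key: "b - norm (y - z) \<le> norm (x + z) - a" if "(x, a) \<in> M" "(y, b) \<in> M" for x a y b
  proof -
    have "a + b \<le> norm (x + y)" using dom subspace_add[OF sM that] by simp
    also have "\<dots> \<le> norm (x + z) + norm (y - z)" using norm_triangle_ineq[of "x + z" "y - z"] by simp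
    finally show ?thesis by simp
  qed
  define B where "B = {b - norm (y - z) |y b. (y, b) \<in> M}"
  have "(0, 0) \<in> M" using subspace_0[OF sM] by (simp add: zero_prod_def)
  then have "B \<noteq> {}" and "bdd_above B" unfolding B_def bdd_above_def using key by fastforce+
  have "b - norm (y - z) \<le> Sup B" if "(y, b) \<in> M" for y b
    using that \<open>bdd_above B\<close> unfolding B_def by (blast intro: cSup_upper)
  moreover have "Sup B \<le> norm (x + z) - a" if "(x, a) \<in> M" for x a
    using \<open>B \<noteq> {}\<close> key[OF that] unfolding B_def by (blast intro: cSup_least)
  ultimately show ?thesis by blast
qed

lemma norm_dominated_graph_insert:
  assumes M: "norm_dominated_graph M"
    and lower: "\<forall>(y, b)\<in>M. b - norm (y - z) \<le> c" and upper: "\<forall>(x, a)\<in>M. c \<le> norm (x + z) - a"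
  shows "norm_dominated_graph (span (insert (z, c) M))"
  unfolding norm_dominated_graph_def
proof (intro conjI subspace_span ballI, clarify)
  have sM: "subspace M" using M unfolding norm_dominated_graph_def by blast
  fix w e assume "(w, e) \<in> span (insert (z, c) M)"
  then obtain t where "(w - t *\<^sub>R z, e - t * c) \<in> M"
    unfolding span_breakdown_eq span_eq_iff[THEN iffD2, OF sM] by auto
  then obtain x a where xa: "(x, a) \<in> M" and w: "w = x + t *\<^sub>R z" and e: "e = a + t * c" by force
  consider "t = 0" | "t > 0" | "t < 0" by linarith
  then show "e \<le> norm w"
  proof cases
    case 1
    then show ?thesis using M xa w e unfolding norm_dominated_graph_def by auto
  next
    case 2
    have "((1 / t) *\<^sub>R x, a / t) \<in> M" using subspace_scale[OF sM xa, of "1 / t"] by simp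
    then have "c \<le> norm ((1 / t) *\<^sub>R x + z) - a / t" using upper by auto
    also have "(1 / t) *\<^sub>R x + z = (1 / t) *\<^sub>R w" using 2 w by (simp add: algebra_simps)
    finally have "t * c \<le> norm w - a" using 2 by (simp add: field_simps)
    then show ?thesis using e by simp
  next
    case 3
    have "((- 1 / t) *\<^sub>R x, - a / t) \<in> M" using subspace_scale[OF sM xa, of "- 1 / t"] by simp
    then have "- a / t - norm ((- 1 / t) *\<^sub>R x - z) \<le> c" using lower by auto
    also have "(- 1 / t) *\<^sub>R x - z = (- 1 / t) *\<^sub>R w" using 3 w by (simp add: algebra_simps)
    finally have "a - norm w \<le> - t * c" using 3 by (simp add: field_simps)
    then show ?thesis using e by simp
  qed
qed

lemma norm_dominated_graph_extend:
  assumes M: "norm_dominated_graph M" and z: "z \<notin> fst ` M"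
  shows "\<exists>G. norm_dominated_graph G \<and> M \<subset> G"
proof -
  obtain c where "\<forall>(y, b)\<in>M. b - norm (y - z) \<le> c" "\<forall>(x, a)\<in>M. c \<le> norm (x + z) - a"
    using norm_dominated_graph_extension_value[OF M] by blast
  then have "norm_dominated_graph (span (insert (z, c) M))"
    by (rule norm_dominated_graph_insert[OF M])
  moreover have "M \<subset> span (insert (z, c) M)"
    using z span_superset[of "insert (z, c) M"] by force
  ultimately show ?thesis by blast
qed

lemma norm_dominated_graph_Union_chain:
  assumes "C \<noteq> {}" "\<forall>G\<in>C. norm_dominated_graph G" "\<forall>X\<in>C. \<forall>Y\<in>C. X \<subseteq> Y \<or> Y \<subseteq> X"
  shows "norm_dominated_graph (\<Union>C)"
proof -
  have sub: "subspace G" if "G \<in> C" for G using assms(2) that unfolding norm_dominated_graph_def by blast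
  have common: "\<exists>G\<in>C. p \<in> G \<and> q \<in> G" if "p \<in> \<Union>C" "q \<in> \<Union>C" for p q
    using that assms(3) by blast
  have "subspace (\<Union>C)"
    unfolding subspace_def
  proof (intro conjI ballI allI)
    show "0 \<in> \<Union>C" using assms(1) sub subspace_0 by blast
    fix p q assume "p \<in> \<Union>C" "q \<in> \<Union>C"
    then show "p + q \<in> \<Union>C" using common sub subspace_add by blast
  next
    fix r p assume "p \<in> \<Union>C"
    then show "r *\<^sub>R p \<in> \<Union>C" using sub subspace_scale by blast
  qed
  then show ?thesis using assms(2) unfolding norm_dominated_graph_def by blast
qed

lemma hahn_banach_norm:
  fixes G0 :: "('a::real_normed_vector \<times> real) set"
  assumes G0: "norm_dominated_graph G0"
  shows "\<exists>\<phi>. linear \<phi> \<and> (\<forall>x. \<phi> x \<le> norm x) \<and> (\<forall>(x, a)\<in>G0. \<phi> x = a)"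
proof -
  define \<A> where "\<A> = {G. norm_dominated_graph G \<and> G0 \<subseteq> G}"
  have "\<exists>M\<in>\<A>. \<forall>X\<in>\<A>. M \<subseteq> X \<longrightarrow> X = M"
  proof (rule subset_Zorn_nonempty)
    show "\<A> \<noteq> {}" using G0 unfolding \<A>_def by blast
    fix C assume "C \<noteq> {}" "subset.chain \<A> C"
    then show "\<Union>C \<in> \<A>"
      using norm_dominated_graph_Union_chain[of C] unfolding \<A>_def subset_chain_def by blast
  qed
  then obtain M where "M \<in> \<A>" and maximal: "\<forall>X\<in>\<A>. M \<subseteq> X \<longrightarrow> X = M" by blast
  then have M: "norm_dominated_graph M" "G0 \<subseteq> M" unfolding \<A>_def by auto
  have "x \<in> fst ` M" for x
  proof (rule ccontr)
    assume "x \<notin> fst ` M"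
    then obtain G where "norm_dominated_graph G" "M \<subset> G"
      using norm_dominated_graph_extend[OF M(1)] by blast
    then show False using maximal M(2) unfolding \<A>_def by blast
  qed
  then have "\<exists>a. (x, a) \<in> M" for x by force
  then obtain \<phi> where \<phi>: "\<And>x. (x, \<phi> x) \<in> M" by metis
  have sM: "subspace M" using M(1) unfolding norm_dominated_graph_def by blast
  have \<phi>_eq: "\<phi> x = a" if "(x, a) \<in> M" for x a
    using norm_dominated_graph_unique[OF M(1) \<phi> that] .
  have "linear \<phi>"
    by (rule linearI) (use subspace_add[OF sM \<phi> \<phi>] subspace_scale[OF sM \<phi>] \<phi>_eq in auto)
  moreover have "\<phi> x \<le> norm x" for x using \<phi>[of x] M(1) unfolding norm_dominated_graph_def by blast
  ultimately show ?thesis using M(2) \<phi>_eq by blast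
qed

lemma dual_complexification:
  fixes \<phi> :: "'a::complex_banach \<Rightarrow> real"
  assumes lin: "linear \<phi>" and bound: "\<And>x. \<phi> x \<le> norm x"
  shows "\<exists>g\<in>dual. \<forall>x. Re (blinfun_apply g x) = \<phi> x"
proof -
  define g where "g x = Complex (\<phi> x) (- \<phi> (cscale \<i> x))" for x
  have abs_\<phi>: "\<bar>\<phi> x\<bar> \<le> norm x" for x
    using bound[of x] bound[of "- x"] linear_neg[OF lin, of x] by simp
  have i_add: "cscale \<i> (x + y) = cscale \<i> x + cscale \<i> y" for x y :: 'a
    by (rule cscale_add_right)
  have i_scaleR: "cscale \<i> (r *\<^sub>R x) = r *\<^sub>R cscale \<i> x" for r and x :: 'a
    by (simp add: scaleR_cscale mult.commute)
  have "bounded_linear g"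
  proof (rule bounded_linear_intro[where K=2])
    fix x
    have "norm (g x) \<le> \<bar>\<phi> x\<bar> + \<bar>\<phi> (cscale \<i> x)\<bar>"
      unfolding g_def using cmod_le[of "Complex (\<phi> x) (- \<phi> (cscale \<i> x))"] by simp
    also have "\<dots> \<le> norm x + norm (cscale \<i> x)" by (intro add_mono abs_\<phi>)
    finally show "norm (g x) \<le> norm x * 2" by (simp add: norm_cscale)
  qed (simp_all add: g_def i_add i_scaleR linear_add[OF lin] linear_scale[OF lin] complex_eq_iff)
  moreover have "g (cscale c x) = c * g x" for c x
  proof -
    have c: "cscale c x = Re c *\<^sub>R x + Im c *\<^sub>R cscale \<i> x"
      by (simp add: scaleR_cscale cscale_add_left[symmetric] complex_eq_iff)
    have ii: "cscale \<i> (cscale \<i> x) = - x" by (simp add: cv.scale_minus_left)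
    show ?thesis
      unfolding g_def c i_add i_scaleR ii linear_add[OF lin] linear_scale[OF lin] linear_neg[OF lin]
      by (simp add: complex_eq_iff algebra_simps)
  qed
  ultimately show ?thesis
    unfolding dual_def by (intro bexI[of _ "Blinfun g"]) (simp_all add: bounded_linear_Blinfun_apply g_def)
qed

lemma dual_separates_closed_csubspace:
  fixes S :: "'a::complex_banach set"
  assumes S: "cv.subspace S" "closed S" and z: "z \<notin> S"
  shows "\<exists>g\<in>dual. (\<forall>y\<in>S. blinfun_apply g y = 0) \<and> blinfun_apply g z \<noteq> 0"
proof -
  have S_scaleR: "r *\<^sub>R x \<in> S" if "x \<in> S" for r x
    using cv.subspace_scale[OF S(1) that] by (simp add: scaleR_cscale)
  define d where "d = infdist z S"
  have "d \<noteq> 0" using in_closed_iff_infdist_zero[OF S(2)] cv.subspace_0[OF S(1)] z unfolding d_def by blast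
  then have d: "d > 0" using infdist_nonneg[of z S] unfolding d_def by linarith
  \<comment> \<open>The functional \<open>s + t z \<mapsto> t d\<close> on \<open>S + \<real>z\<close> is dominated by the norm exactly because \<open>d = dist z S\<close>.\<close>
  define G0 where "G0 = (\<lambda>(s, t). (s + t *\<^sub>R z, t * d)) ` (S \<times> UNIV)"
  have "subspace G0"
    unfolding G0_def
  proof (rule linear_subspace_image)
    show "linear (\<lambda>(s, t). (s + t *\<^sub>R z, t * d))"
      by (rule linearI) (auto simp: algebra_simps)
    show "subspace (S \<times> (UNIV :: real set))"
      by (intro subspace_Times subspace_UNIV) (simp add: subspace_def cv.subspace_0[OF S(1)]
          cv.subspace_add[OF S(1)] S_scaleR)
  qed
  moreover have "t * d \<le> norm (s + t *\<^sub>R z)" if "s \<in> S" for s t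
  proof (cases "t > 0")
    case True
    have "d \<le> dist z ((- 1 / t) *\<^sub>R s)" unfolding d_def by (rule infdist_le) (rule S_scaleR[OF that])
    also have "\<dots> = norm ((1 / t) *\<^sub>R (s + t *\<^sub>R z))" using True by (simp add: dist_norm algebra_simps)
    also have "\<dots> = norm (s + t *\<^sub>R z) / t" using True by simp
    finally show ?thesis using True by (simp add: field_simps)
  qed (use d in \<open>simp add: mult_nonpos_nonneg order_trans[OF _ norm_ge_zero]\<close>)
  ultimately have "norm_dominated_graph G0" unfolding norm_dominated_graph_def G0_def by auto
  then obtain \<phi> where lin: "linear \<phi>" and bound: "\<And>x. \<phi> x \<le> norm x"
    and ext: "\<And>x a. (x, a) \<in> G0 \<Longrightarrow> \<phi> x = a"
    using hahn_banach_norm by fast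
  obtain g where g: "g \<in> dual" and Re_g: "\<And>x. Re (blinfun_apply g x) = \<phi> x"
    using dual_complexification[OF lin bound] by blast
  have \<phi>_S: "\<phi> s = 0" if "s \<in> S" for s
    using ext[of s 0] that unfolding G0_def by force
  have "blinfun_apply g y = 0" if "y \<in> S" for y
  proof -
    have "Im (blinfun_apply g y) = - Re (blinfun_apply g (cscale \<i> y))"
      using dual_cscale[OF g] by simp
    then show ?thesis
      using Re_g \<phi>_S that cv.subspace_scale[OF S(1) that] by (simp add: complex_eq_iff)
  qed
  moreover have "Re (blinfun_apply g z) = d"
    using Re_g ext[of z d] cv.subspace_0[OF S(1)] unfolding G0_def by force
  ultimately show ?thesis using g d by force
qed

section \<open>The bimodule \<open>M\<^sup>0(\<Psi>)\<close>\<close>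

lemma op_cspan_minimal: "op_csubspace J \<Longrightarrow> G \<subseteq> J \<Longrightarrow> op_cspan G \<subseteq> J"
  unfolding op_cspan_def by blast

lemma op_cspan_superset: "G \<subseteq> op_cspan G"
  unfolding op_cspan_def by blast

lemma op_csubspace_op_cspan:
  assumes "G \<subseteq> bop" shows "op_csubspace (op_cspan G)"
proof -
  have "op_cspan G \<subseteq> bop" by (rule op_cspan_minimal[OF op_csubspace_bop assms])
  then show ?thesis
    unfolding op_csubspace_def[of "op_cspan G"]
  proof (intro conjI ballI allI impI)
    show "0 \<in> op_cspan G" unfolding op_cspan_def op_csubspace_def by blast
    fix S R assume "S \<in> op_cspan G" "R \<in> op_cspan G"
    then show "S + R \<in> op_cspan G" unfolding op_cspan_def op_csubspace_def by blast
  next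
    fix c S R assume "S \<in> op_cspan G" "\<forall>x. blinfun_apply R x = cscale c (blinfun_apply S x)"
    then show "R \<in> op_cspan G" unfolding op_cspan_def op_csubspace_def by blast
  qed
qed

lemma bimodule_op_cspan:
  assumes G: "G \<subseteq> bop"
    and generators: "\<And>A S. A \<in> nest_alg \<E> \<Longrightarrow> S \<in> G \<Longrightarrow> A o\<^sub>L S \<in> op_cspan G \<and> S o\<^sub>L A \<in> op_cspan G"
  shows "bimodule \<E> (op_cspan G)"
  unfolding bimodule_def
proof (intro conjI ballI)
  have sp: "op_csubspace (op_cspan G)" by (rule op_csubspace_op_cspan[OF G])
  then show "op_csubspace (op_cspan G)" .
  fix A S assume A: "A \<in> nest_alg \<E>" and S: "S \<in> op_cspan G"
  define J where "J = {S \<in> op_cspan G. A o\<^sub>L S \<in> op_cspan G \<and> S o\<^sub>L A \<in> op_cspan G}"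
  have "op_csubspace J"
    unfolding op_csubspace_def
  proof (intro conjI ballI allI impI)
    show "J \<subseteq> bop" "0 \<in> J" using sp unfolding J_def op_csubspace_def by auto
  next
    fix S R assume "S \<in> J" "R \<in> J"
    moreover have "A o\<^sub>L (S + R) = (A o\<^sub>L S) + (A o\<^sub>L R)" "(S + R) o\<^sub>L A = (S o\<^sub>L A) + (R o\<^sub>L A)"
      by (rule bounded_bilinear.add_right[OF bounded_bilinear_blinfun_compose]
          bounded_bilinear.add_left[OF bounded_bilinear_blinfun_compose])+
    ultimately show "S + R \<in> J"
      using sp unfolding J_def op_csubspace_def by auto
  next
    fix c S R assume S: "S \<in> J" and R: "\<forall>x. blinfun_apply R x = cscale c (blinfun_apply S x)"
    have S: "S \<in> op_cspan G" "A o\<^sub>L S \<in> op_cspan G" "S o\<^sub>L A \<in> op_cspan G"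
      using S unfolding J_def by auto
    have "R \<in> op_cspan G" by (rule op_csubspace_cscale[OF sp S(1), of _ c]) (simp add: R)
    moreover have "A o\<^sub>L R \<in> op_cspan G"
      by (rule op_csubspace_cscale[OF sp S(2), of _ c]) (simp add: R bop_cscale[OF nest_alg_bop[OF A]])
    moreover have "R o\<^sub>L A \<in> op_cspan G" by (rule op_csubspace_cscale[OF sp S(3), of _ c]) (simp add: R)
    ultimately show "R \<in> J" unfolding J_def by blast
  qed
  moreover have "G \<subseteq> J" using generators[OF A] op_cspan_superset unfolding J_def by blast
  ultimately have "op_cspan G \<subseteq> J" by (rule op_cspan_minimal)
  then show "A o\<^sub>L S \<in> op_cspan G" "S o\<^sub>L A \<in> op_cspan G" using S unfolding J_def by auto
qed

lemma closure_closed_under_continuous: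
  assumes "continuous_on UNIV f" "\<And>S. S \<in> J \<Longrightarrow> f S \<in> closure J" "S \<in> closure J"
  shows "f S \<in> closure J"
  using image_closure_subset[OF continuous_on_subset[OF assms(1)] closed_closure] assms(2,3) by blast

lemma bimodule_closure:
  assumes J: "bimodule \<E> J"
  shows "bimodule \<E> (closure J)"
proof -
  have sp: "op_csubspace J" using J unfolding bimodule_def by blast
  have J_closure: "S \<in> J \<Longrightarrow> S \<in> closure J" for S using closure_subset by blast
  have continuous: "continuous_on UNIV (\<lambda>S. A o\<^sub>L S)" "continuous_on UNIV (\<lambda>S. S o\<^sub>L A)"
    "continuous_on UNIV (\<lambda>S. S + A)" "continuous_on UNIV (\<lambda>S. A + S)" for A :: "'a \<Rightarrow>\<^sub>L 'a"
    by (intro continuous_intros)+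
  show ?thesis
    unfolding bimodule_def op_csubspace_def
  proof (intro conjI ballI allI impI)
    have "J \<subseteq> bop" "0 \<in> J" using sp unfolding op_csubspace_def by blast+
    then show "closure J \<subseteq> bop" "0 \<in> closure J"
      using closure_minimal[OF _ closed_bop] J_closure by blast+
  next
    fix S R assume S: "S \<in> closure J" and R: "R \<in> closure J"
    have "S' + R' \<in> closure J" if "S' \<in> closure J" "R' \<in> J" for S' R'
      using sp that(2) J_closure unfolding op_csubspace_def
      by (intro closure_closed_under_continuous[OF continuous(3) _ that(1)]) auto
    then show "S + R \<in> closure J"
      by (rule closure_closed_under_continuous[OF continuous(4) _ R]) (use S in blast)
  next
    fix c S R assume S: "S \<in> closure J" and R: "\<forall>x. blinfun_apply R x = cscale c (blinfun_apply S x)"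
    have "cmul c o\<^sub>L S' \<in> J" if "S' \<in> J" for S'
      by (rule op_csubspace_cscale[OF sp that, of _ c]) simp
    then have "cmul c o\<^sub>L S \<in> closure J"
      using J_closure by (intro closure_closed_under_continuous[OF continuous(1) _ S]) blast
    moreover have "R = cmul c o\<^sub>L S" using R by (auto intro: blinfun_eqI)
    ultimately show "R \<in> closure J" by simp
  next
    fix A S assume A: "A \<in> nest_alg \<E>" and S: "S \<in> closure J"
    have left: "A o\<^sub>L S' \<in> closure J" and right: "S' o\<^sub>L A \<in> closure J" if "S' \<in> J" for S'
      using J A that J_closure unfolding bimodule_def by blast+
    show "A o\<^sub>L S \<in> closure J" using left by (rule closure_closed_under_continuous[OF continuous(1) _ S])
    show "S o\<^sub>L A \<in> closure J" using right by (rule closure_closed_under_continuous[OF continuous(2) _ S])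
  qed
qed

definition M0_generators :: "'a::complex_banach set set \<Rightarrow> ('a set \<Rightarrow> 'a set) \<Rightarrow> ('a \<Rightarrow>\<^sub>L 'a) set" where
  "M0_generators \<E> \<Psi> = \<Union>{{rank_one f x |f x. f \<in> annih (lower \<E> N) \<and> x \<in> L}
        |L N. L \<in> \<E> \<and> N \<in> \<E> \<and> lower \<E> L \<subset> \<Psi> N}"

lemma M0_eq: "M0 \<E> \<Psi> = closure (op_cspan (M0_generators \<E> \<Psi>))"
  unfolding M0_def M0_generators_def ..

lemma M0_generators_bop: "M0_generators \<E> \<Psi> \<subseteq> bop"
  unfolding M0_generators_def annih_def using rank_one_bop by blast

lemma rank_one_M0_generators:
  assumes "L \<in> \<E>" "N \<in> \<E>" "lower \<E> L \<subset> \<Psi> N" "f \<in> annih (lower \<E> N)" "x \<in> L"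
  shows "rank_one f x \<in> M0_generators \<E> \<Psi>"
  unfolding M0_generators_def using assms by blast

lemma M0_bimodule:
  assumes nest: "nest \<E>"
  shows "bimodule \<E> (M0 \<E> \<Psi>)"
  unfolding M0_eq
proof (rule bimodule_closure, rule bimodule_op_cspan[OF M0_generators_bop], rule conjI)
  fix A S assume A: "A \<in> nest_alg \<E>" and S: "S \<in> M0_generators \<E> \<Psi>"
  obtain L N f x where LN: "L \<in> \<E>" "N \<in> \<E>" "lower \<E> L \<subset> \<Psi> N"
    and f: "f \<in> annih (lower \<E> N)" and x: "x \<in> L" and S_eq: "S = rank_one f x"
    using S unfolding M0_generators_def by blast
  have "blinfun_apply A x \<in> L" using nest_alg_invariant[OF A LN(1)] x by blast
  then have "A o\<^sub>L S \<in> M0_generators \<E> \<Psi>"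
    unfolding S_eq compose_rank_one_left[OF nest_alg_bop[OF A]]
    by (rule rank_one_M0_generators[of L \<E> N \<Psi>, OF LN f])
  then show "A o\<^sub>L S \<in> op_cspan (M0_generators \<E> \<Psi>)" using op_cspan_superset by blast
  have "blinfun_apply A ` lower \<E> N \<subseteq> lower \<E> N"
    by (rule nest_alg_invariant[OF A lower_in_nest[OF nest]])
  then have "f o\<^sub>L A \<in> annih (lower \<E> N)"
    using f dual_compose[OF _ nest_alg_bop[OF A]] unfolding annih_def by auto
  then have "S o\<^sub>L A \<in> M0_generators \<E> \<Psi>"
    unfolding S_eq compose_rank_one_right by (rule rank_one_M0_generators[of L \<E> N \<Psi>, OF LN _ x])
  then show "S o\<^sub>L A \<in> op_cspan (M0_generators \<E> \<Psi>)" using op_cspan_superset by blast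
qed

lemma M0_generators_subset:
  assumes nest: "nest \<E>" and J: "bimodule \<E> J" and Phi: "\<forall>N\<in>\<E>. Phi_e \<E> J N = \<Psi> N"
  shows "M0_generators \<E> \<Psi> \<subseteq> J"
proof
  fix S assume "S \<in> M0_generators \<E> \<Psi>"
  then obtain L N f x where L: "L \<in> \<E>" and N: "N \<in> \<E>" and less: "lower \<E> L \<subset> \<Psi> N"
    and f: "f \<in> annih (lower \<E> N)" and x: "x \<in> L" and S_eq: "S = rank_one f x"
    unfolding M0_generators_def by blast
  have sp: "op_csubspace J" using J unfolding bimodule_def by blast
  have lower_L: "lower \<E> L \<in> \<E>" by (rule lower_in_nest[OF nest])
  obtain T y where T: "T \<in> J" and y: "y \<in> N" and Ty: "blinfun_apply T y \<notin> lower \<E> L"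
  proof -
    have "\<not> Phi_e \<E> J N \<subseteq> lower \<E> L" using Phi N less by auto
    then obtain T where "T \<in> J" "\<not> fin_quot (blinfun_apply T ` N) (lower \<E> L)"
      unfolding Phi_e_def using lower_L by blast
    then show ?thesis using that fin_quot_trivial by blast
  qed
  obtain g where g: "g \<in> annih (lower \<E> L)" and gTy: "blinfun_apply g (blinfun_apply T y) \<noteq> 0"
    using dual_separates_closed_csubspace[OF nest_subspace[OF nest lower_L] nest_closed[OF nest lower_L] Ty]
    unfolding annih_def by blast
  \<comment> \<open>\<open>f \<otimes> x\<close> is a multiple of \<open>(g \<otimes> x) T (f \<otimes> y)\<close>, whose outer factors lie in the nest algebra.\<close>
  have "rank_one g x o\<^sub>L (T o\<^sub>L rank_one f y) \<in> J"
    using J T rank_one_nest_alg[OF nest L g x] rank_one_nest_alg[OF nest N f y]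
    unfolding bimodule_def by blast
  moreover have "T \<in> bop" "f \<in> dual" "g \<in> dual"
    using sp T f g unfolding op_csubspace_def annih_def by auto
  then have "blinfun_apply (rank_one f x) w
      = cscale (1 / blinfun_apply g (blinfun_apply T y))
          (blinfun_apply (rank_one g x o\<^sub>L (T o\<^sub>L rank_one f y)) w)" for w
    using gTy by (simp add: bop_cscale dual_cscale mult.commute)
  ultimately show "S \<in> J" unfolding S_eq by (rule op_csubspace_cscale[OF sp])
qed

lemma M0_subset_closed_bimodule:
  assumes "nest \<E>" "bimodule \<E> J" "closed J" "\<forall>N\<in>\<E>. Phi_e \<E> J N = \<Psi> N"
  shows "M0 \<E> \<Psi> \<subseteq> J"
proof -
  have "op_csubspace J" using assms(2) unfolding bimodule_def by blast
  then have "op_cspan (M0_generators \<E> \<Psi>) \<subseteq> J"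
    using M0_generators_subset[OF assms(1,2,4)] by (rule op_cspan_minimal)
  then show ?thesis unfolding M0_eq using assms(3) by (rule closure_minimal)
qed

theorem mainTheorem15:
  fixes \<E> :: "'a::complex_banach set set" and \<Psi> :: "'a set \<Rightarrow> 'a set"
  assumes "nest \<E>" and "ess_support_fn \<E> \<Psi>"
  shows "(bimodule \<E> (Me \<E> \<Psi>)
          \<and> (\<forall>J. bimodule \<E> J \<and> (\<forall>N\<in>\<E>. Phi_e \<E> J N = \<Psi> N) \<longrightarrow> J \<subseteq> Me \<E> \<Psi>))
       \<and> (bimodule \<E> (M0 \<E> \<Psi>)
          \<and> (\<forall>J. bimodule \<E> J \<and> closed J \<and> (\<forall>N\<in>\<E>. Phi_e \<E> J N = \<Psi> N) \<longrightarrow> M0 \<E> \<Psi> \<subseteq> J))"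
proof (intro conjI allI impI)
  show "bimodule \<E> (Me \<E> \<Psi>)" by (rule Me_bimodule[OF assms(1)])
  show "bimodule \<E> (M0 \<E> \<Psi>)" by (rule M0_bimodule[OF assms(1)])
next
  fix J assume "bimodule \<E> J \<and> (\<forall>N\<in>\<E>. Phi_e \<E> J N = \<Psi> N)"
  then show "J \<subseteq> Me \<E> \<Psi>" using bimodule_subset_Me[OF assms(1)] by blast
next
  fix J assume "bimodule \<E> J \<and> closed J \<and> (\<forall>N\<in>\<E>. Phi_e \<E> J N = \<Psi> N)"
  then show "M0 \<E> \<Psi> \<subseteq> J" using M0_subset_closed_bimodule[OF assms(1)] by blast
qed

end
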